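(* For any symmetric design $P$: (1) $C_d$ is completely symmetric; (2) $\mathrm{tr}(C_d)=q_d^*$; (3) moreover, for any design $P$ (not necessarily symmetric) there exists a symmetric design with the same value of $q_d^*$.
   Context: Fix integers $p,t\ge2$, $n\ge1$ and a probability vector $\vec a=(a_1,\dots,a_p)$. Write $a_{jk}=\sum_{i=j}^ka_i$ ($a_{1,0}=0$, $a_{p+1,p}=0$), $\alpha_k=n^{-1}((n+1)a_k+a_{1,k-1}^{n+1}-a_{1k}^{n+1})$, $\beta_k=a_k+a_{k+1,p}a_{1k}^n-a_{kp}a_{1,k-1}^n$. $J_k$ is the $k\times k$ all-ones matrix, $B_k=I_k-J_k/k$, $B^k_p$ the $p\times p$ matrix with $B_k$ in its upper-left $k\times k$ block and zeros elsewhere; $A=\sum_k\alpha_kB^k_p$, $B=\sum_k\beta_kB^k_p$. $\mathcal S=\{1,\dots,t\}^p$; for $s=(t_1,\dots,t_p)$, $T_s$ is the $p\times t$ matrix with $(k,i)$ entry $1$ iff $t_k=i$, and $F_s$ the $p\times t$ matrix with zero first row and $(k,i)$ entry $1$ iff $t_{k-1}=i$ ($k\ge2$). A design is a probability vector $P=(p_s)_{s\in\mathcal S}$. With $\bar T=\sum_sp_sT_s$, $\bar F=\sum_sp_sF_s$: $C_{d11}=n(\sum_sp_sT_s'AT_s-\bar T'B\bar T)$, $C_{d12}=n(\sum_sp_sT_s'AF_s-\bar T'B\bar F)=C_{d21}'$, $C_{d22}=n(\sum_sp_sF_s'AF_s-\bar F'B\bar F)$, $C_d=C_{d11}-C_{d12}C_{d22}^-C_{d21}$.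 Let $\hat T_s=T_sB_t$, $\hat F_s=F_sB_t$, $q_{s11}=\mathrm{tr}(\hat T_s'A\hat T_s)$, $q_{s12}=\mathrm{tr}(\hat T_s'A\hat F_s)$, $q_{s22}=\mathrm{tr}(\hat F_s'A\hat F_s)$, $q_{dij}=n\sum_sp_sq_{sij}$, and $q_d^*=q_{d11}-q_{d12}^2/q_{d22}$ (equivalently $q_d^*=n\min_{x\in\mathbb R}\sum_sp_s(q_{s11}+2q_{s12}x+q_{s22}x^2)$). For a permutation $\sigma$ of $\{1,\dots,t\}$ let $\sigma s=(\sigma(t_1),\dots,\sigma(t_p))$; $P$ is symmetric if $p_{\sigma s}=p_s$ for all $\sigma$ and $s$. A $t\times t$ matrix is completely symmetric if it is of the form $aI_t+bJ_t$. *)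

theory Defs
  imports Complex_Main "Jordan_Normal_Form.Matrix"
begin

(* Conventions: the probability vector a is indexed 1..p (a :: nat => real);
   matrix rows/columns and treatment labels are 0-based (treatments 0..t-1,
   periods 0..p-1). *)

definition mtrace :: "real mat \<Rightarrow> real" where
  "mtrace M = (\<Sum>i<dim_row M. M $$ (i, i))"

definition asum :: "(nat \<Rightarrow> real) \<Rightarrow> nat \<Rightarrow> nat \<Rightarrow> real" where
  "asum a j k = (\<Sum>i\<in>{j..k}. a i)"

definition alpha :: "(nat \<Rightarrow> real) \<Rightarrow> nat \<Rightarrow> nat \<Rightarrow> real" where
  "alpha a n k = (real (n+1) * a k + asum a 1 (k-1) ^ (n+1) - asum a 1 k ^ (n+1)) / real n"

definition beta :: "(nat \<Rightarrow> real) \<Rightarrow> nat \<Rightarrow> nat \<Rightarrow> nat \<Rightarrow> real" where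
  "beta a p n k = a k + asum a (k+1) p * asum a 1 k ^ n - asum a k p * asum a 1 (k-1) ^ n"

definition Bcent :: "nat \<Rightarrow> real mat" where
  "Bcent k = mat k k (\<lambda>(i,j). (if i = j then 1 else 0) - 1 / real k)"

definition Bkp :: "nat \<Rightarrow> nat \<Rightarrow> real mat" where
  "Bkp p k = mat p p (\<lambda>(i,j). if i < k \<and> j < k then (if i = j then 1 else 0) - 1 / real k else 0)"

definition Amat :: "(nat \<Rightarrow> real) \<Rightarrow> nat \<Rightarrow> nat \<Rightarrow> real mat" where
  "Amat a p n = mat p p (\<lambda>ij. \<Sum>k=1..p. alpha a n k * Bkp p k $$ ij)"

definition Bmat :: "(nat \<Rightarrow> real) \<Rightarrow> nat \<Rightarrow> nat \<Rightarrow> real mat" where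
  "Bmat a p n = mat p p (\<lambda>ij. \<Sum>k=1..p. beta a p n k * Bkp p k $$ ij)"

definition Sset :: "nat \<Rightarrow> nat \<Rightarrow> nat list set" where
  "Sset p t = {s. length s = p \<and> set s \<subseteq> {0..<t}}"

definition Tm :: "nat \<Rightarrow> nat \<Rightarrow> nat list \<Rightarrow> real mat" where
  "Tm p t s = mat p t (\<lambda>(k,i). if s ! k = i then 1 else 0)"

definition Fm :: "nat \<Rightarrow> nat \<Rightarrow> nat list \<Rightarrow> real mat" where
  "Fm p t s = mat p t (\<lambda>(k,i). if 1 \<le> k \<and> s ! (k - 1) = i then 1 else 0)"

definition design :: "nat \<Rightarrow> nat \<Rightarrow> (nat list \<Rightarrow> real) \<Rightarrow> bool" where
  "design p t P \<longleftrightarrow> (\<forall>s\<in>Sset p t. P s \<ge> 0) \<and> (\<Sum>s\<in>Sset p t. P s) = 1"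

definition symmetric_design :: "nat \<Rightarrow> nat \<Rightarrow> (nat list \<Rightarrow> real) \<Rightarrow> bool" where
  "symmetric_design p t P \<longleftrightarrow>
     (\<forall>\<sigma>. \<sigma> permutes {0..<t} \<longrightarrow> (\<forall>s\<in>Sset p t. P (map \<sigma> s) = P s))"

definition msum :: "nat \<Rightarrow> nat \<Rightarrow> (nat list \<Rightarrow> real) \<Rightarrow> (nat list \<Rightarrow> real mat) \<Rightarrow> nat \<Rightarrow> nat \<Rightarrow> real mat" where
  "msum p t P M r c = mat r c (\<lambda>ij. \<Sum>s\<in>Sset p t. P s * M s $$ ij)"

definition Tbar where "Tbar p t P = msum p t P (Tm p t) p t"
definition Fbar where "Fbar p t P = msum p t P (Fm p t) p t"

definition Cd11 :: "(nat \<Rightarrow> real) \<Rightarrow> nat \<Rightarrow> nat \<Rightarrow> nat \<Rightarrow> (nat list \<Rightarrow> real) \<Rightarrow> real mat" where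
  "Cd11 a p t n P = real n \<cdot>\<^sub>m
     (msum p t P (\<lambda>s. transpose_mat (Tm p t s) * Amat a p n * Tm p t s) t t
      - transpose_mat (Tbar p t P) * Bmat a p n * Tbar p t P)"

definition Cd12 :: "(nat \<Rightarrow> real) \<Rightarrow> nat \<Rightarrow> nat \<Rightarrow> nat \<Rightarrow> (nat list \<Rightarrow> real) \<Rightarrow> real mat" where
  "Cd12 a p t n P = real n \<cdot>\<^sub>m
     (msum p t P (\<lambda>s. transpose_mat (Tm p t s) * Amat a p n * Fm p t s) t t
      - transpose_mat (Tbar p t P) * Bmat a p n * Fbar p t P)"

definition Cd21 :: "(nat \<Rightarrow> real) \<Rightarrow> nat \<Rightarrow> nat \<Rightarrow> nat \<Rightarrow> (nat list \<Rightarrow> real) \<Rightarrow> real mat" where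
  "Cd21 a p t n P = transpose_mat (Cd12 a p t n P)"

definition Cd22 :: "(nat \<Rightarrow> real) \<Rightarrow> nat \<Rightarrow> nat \<Rightarrow> nat \<Rightarrow> (nat list \<Rightarrow> real) \<Rightarrow> real mat" where
  "Cd22 a p t n P = real n \<cdot>\<^sub>m
     (msum p t P (\<lambda>s. transpose_mat (Fm p t s) * Amat a p n * Fm p t s) t t
      - transpose_mat (Fbar p t P) * Bmat a p n * Fbar p t P)"

definition ginverse :: "real mat \<Rightarrow> real mat \<Rightarrow> bool" where
  "ginverse M G \<longleftrightarrow> G \<in> carrier_mat (dim_col M) (dim_row M) \<and> M * G * M = M"

definition Cd :: "(nat \<Rightarrow> real) \<Rightarrow> nat \<Rightarrow> nat \<Rightarrow> nat \<Rightarrow> (nat list \<Rightarrow> real) \<Rightarrow> real mat \<Rightarrow> real mat" where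
  "Cd a p t n P G = Cd11 a p t n P - Cd12 a p t n P * G * Cd21 a p t n P"

definition completely_symmetric :: "nat \<Rightarrow> real mat \<Rightarrow> bool" where
  "completely_symmetric t M \<longleftrightarrow>
     (\<exists>x y. M = x \<cdot>\<^sub>m 1\<^sub>m t + y \<cdot>\<^sub>m mat t t (\<lambda>_. 1))"

definition qs11 where
  "qs11 a p t n s = mtrace (transpose_mat (Tm p t s * Bcent t) * Amat a p n * (Tm p t s * Bcent t))"
definition qs12 where
  "qs12 a p t n s = mtrace (transpose_mat (Tm p t s * Bcent t) * Amat a p n * (Fm p t s * Bcent t))"
definition qs22 where
  "qs22 a p t n s = mtrace (transpose_mat (Fm p t s * Bcent t) * Amat a p n * (Fm p t s * Bcent t))"

definition qd11 where "qd11 a p t n P = real n * (\<Sum>s\<in>Sset p t. P s * qs11 a p t n s)"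
definition qd12 where "qd12 a p t n P = real n * (\<Sum>s\<in>Sset p t. P s * qs12 a p t n s)"
definition qd22 where "qd22 a p t n P = real n * (\<Sum>s\<in>Sset p t. P s * qs22 a p t n s)"

definition qstar :: "(nat \<Rightarrow> real) \<Rightarrow> nat \<Rightarrow> nat \<Rightarrow> nat \<Rightarrow> (nat list \<Rightarrow> real) \<Rightarrow> real" where
  "qstar a p t n P = qd11 a p t n P - (qd12 a p t n P)^2 / qd22 a p t n P"

end

theory Submission
  imports Defs "HOL-Combinatorics.Permutations"
begin

text \<open>
  Relabelling the treatments by a permutation \<sigma> turns T_s and F_s into T_{\<sigma>s} and F_{\<sigma>s}
  with their columns permuted by \<sigma>. For a symmetric design every block C_d11, C_d12, C_d22 is
  therefore invariant under simultaneous permutations of rows and columns, i.e. completely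
  symmetric, and the averages of T_s and F_s have constant rows. Since the columns of A and B
  sum to zero and the rows of T_s sum to one, the columns of C_d11 and C_d12 sum to zero, so
  both are multiples of B_t; the multiples are fixed by the centred traces tr(B_t C B_t), and these are
  q_d11 and q_d12. Likewise B_t G B_t = ((t-1)/q_d22) B_t for every generalized inverse G of
  C_d22, while q_d22 = 0 forces q_d12 = 0 because A is nonnegative definite. Altogether
  C_d = (q_d^*/(t-1)) B_t. Finally the q-values of a sequence are invariant under relabelling,
  so averaging a design over all t! relabellings gives a symmetric design with the same q_d^*.
\<close>

section \<open>Relabelling treatments\<close>

lemma permutes_less: "\<sigma> permutes {0..<t} \<Longrightarrow> (i::nat) < t \<Longrightarrow> \<sigma> i < t"
  using permutes_in_image[of \<sigma> "{0..<t}" i] by auto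

lemma map_permutes_in_Sset:
  assumes "\<sigma> permutes {0..<t}" "s \<in> Sset p t"
  shows "map \<sigma> s \<in> Sset p t"
  using assms permutes_in_image[OF assms(1)] by (auto simp: Sset_def)

lemma sum_Sset_map_permutes:
  assumes "\<sigma> permutes {0..<t}"
  shows "(\<Sum>s\<in>Sset p t. h (map \<sigma> s)) = (\<Sum>s\<in>Sset p t. h s)"
proof (rule sum.reindex_bij_witness[where i="map (Hilbert_Choice.inv \<sigma>)" and j="map \<sigma>"])
  fix s assume s: "s \<in> Sset p t"
  show "map (Hilbert_Choice.inv \<sigma>) (map \<sigma> s) = s" "map \<sigma> (map (Hilbert_Choice.inv \<sigma>) s) = s"
    using permutes_inverses[OF assms] by (simp_all add: map_idI)
  show "map \<sigma> s \<in> Sset p t" by (rule map_permutes_in_Sset[OF assms s])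
  show "map (Hilbert_Choice.inv \<sigma>) s \<in> Sset p t" by (rule map_permutes_in_Sset[OF permutes_inv[OF assms] s])
qed simp

lemma symmetric_design_sum_map_permutes:
  assumes "symmetric_design p t P" "\<sigma> permutes {0..<t}"
  shows "(\<Sum>s\<in>Sset p t. P s * h (map \<sigma> s)) = (\<Sum>s\<in>Sset p t. P s * h s)"
proof -
  have "(\<Sum>s\<in>Sset p t. P s * h (map \<sigma> s)) = (\<Sum>s\<in>Sset p t. P (map \<sigma> s) * h (map \<sigma> s))"
    using assms unfolding symmetric_design_def by (intro sum.cong) auto
  also have "\<dots> = (\<Sum>s\<in>Sset p t. P s * h s)" by (rule sum_Sset_map_permutes[OF assms(2)])
  finally show ?thesis .
qed

lemma permutes_invariant_entries:
  fixes g :: "nat \<Rightarrow> nat \<Rightarrow> real"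
  assumes inv: "\<And>\<sigma> i j. \<sigma> permutes {0..<t} \<Longrightarrow> i < t \<Longrightarrow> j < t \<Longrightarrow> g (\<sigma> i) (\<sigma> j) = g i j"
    and t: "t \<ge> 2" and i: "i < t" and j: "j < t"
  shows "g i j = (if i = j then g 0 0 else g 0 1)"
proof (cases "i = j")
  case True
  have "Transposition.transpose 0 i permutes {0..<t}" using i t by (intro permutes_swap_id) auto
  from inv[OF this, of 0 0] t True show ?thesis by simp
next
  case False
  let ?\<rho> = "Transposition.transpose 0 i"
  let ?\<tau> = "Transposition.transpose (?\<rho> 1) j"
  have \<rho>: "?\<rho> permutes {0..<t}" using i t by (intro permutes_swap_id) auto
  have "?\<rho> 1 < t" using permutes_less[OF \<rho>, of 1] t by simp
  hence "?\<tau> permutes {0..<t}" using j by (intro permutes_swap_id) auto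
  hence \<sigma>: "(?\<tau> \<circ> ?\<rho>) permutes {0..<t}" by (rule permutes_compose[OF \<rho>])
  have "(?\<tau> \<circ> ?\<rho>) 0 = i" "(?\<tau> \<circ> ?\<rho>) 1 = j" using False by (auto simp: transpose_def)
  with inv[OF \<sigma>, of 0 1] t False show ?thesis by simp
qed

section \<open>Information blocks\<close>

definition sandwich :: "nat \<Rightarrow> real mat \<Rightarrow> real mat \<Rightarrow> real mat \<Rightarrow> nat \<Rightarrow> nat \<Rightarrow> real" where
  "sandwich p X A Y i j = (\<Sum>k<p. \<Sum>l<p. X $$ (k,i) * A $$ (k,l) * Y $$ (l,j))"

lemma index_transpose_mult_mult:
  assumes "X \<in> carrier_mat p t" "A \<in> carrier_mat p p" "Y \<in> carrier_mat p t" "i < t" "j < t"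
  shows "(transpose_mat X * A * Y) $$ (i,j) = sandwich p X A Y i j"
proof -
  have "(transpose_mat X * A * Y) $$ (i,j) = (\<Sum>k<p. X $$ (k,i) * (\<Sum>l<p. A $$ (k,l) * Y $$ (l,j)))"
    using assms by (simp add: scalar_prod_def lessThan_atLeast0)
  thus ?thesis unfolding sandwich_def sum_distrib_left by (simp add: mult.assoc)
qed

lemma transpose_mult_mult_carrier:
  "X \<in> carrier_mat p t \<Longrightarrow> A \<in> carrier_mat p p \<Longrightarrow> Y \<in> carrier_mat p t \<Longrightarrow>
   transpose_mat X * A * Y \<in> carrier_mat t t"
  by (metis mult_carrier_mat transpose_carrier_mat)

lemma mtrace_transpose_mult_mult:
  assumes "X \<in> carrier_mat p t" "A \<in> carrier_mat p p" "Y \<in> carrier_mat p t"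
  shows "mtrace (transpose_mat X * A * Y) = (\<Sum>i<t. sandwich p X A Y i i)"
  using transpose_mult_mult_carrier[OF assms] index_transpose_mult_mult[OF assms] assms(1)
  by (simp add: mtrace_def)

lemma Tm_carrier[simp]: "Tm p t s \<in> carrier_mat p t"
  by (simp add: Tm_def)

lemma Fm_carrier[simp]: "Fm p t s \<in> carrier_mat p t"
  by (simp add: Fm_def)

lemma dim_msum[simp]: "dim_row (msum p t P M r c) = r" "dim_col (msum p t P M r c) = c"
  by (simp_all add: msum_def)

lemma msum_carrier[simp]: "msum p t P M r c \<in> carrier_mat r c"
  by (simp add: msum_def)

lemma index_msum: "i < r \<Longrightarrow> j < c \<Longrightarrow> msum p t P M r c $$ (i,j) = (\<Sum>s\<in>Sset p t. P s * M s $$ (i,j))"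
  by (simp add: msum_def)

definition info_block ::
  "nat \<Rightarrow> nat \<Rightarrow> nat \<Rightarrow> (nat list \<Rightarrow> real) \<Rightarrow> (nat list \<Rightarrow> real mat) \<Rightarrow> (nat list \<Rightarrow> real mat) \<Rightarrow>
   real mat \<Rightarrow> real mat \<Rightarrow> real mat" where
  "info_block p t n P X Y A B = real n \<cdot>\<^sub>m
     (msum p t P (\<lambda>s. transpose_mat (X s) * A * Y s) t t
      - transpose_mat (msum p t P X p t) * B * msum p t P Y p t)"

lemma dim_info_block[simp]:
  "dim_row (info_block p t n P X Y A B) = t" "dim_col (info_block p t n P X Y A B) = t"
  by (simp_all add: info_block_def)

lemma info_block_carrier[simp]: "info_block p t n P X Y A B \<in> carrier_mat t t"
  by (rule carrier_matI) simp_all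

lemma Cd11_eq_info_block: "Cd11 a p t n P = info_block p t n P (Tm p t) (Tm p t) (Amat a p n) (Bmat a p n)"
  by (simp add: Cd11_def info_block_def Tbar_def)

lemma Cd12_eq_info_block: "Cd12 a p t n P = info_block p t n P (Tm p t) (Fm p t) (Amat a p n) (Bmat a p n)"
  by (simp add: Cd12_def info_block_def Tbar_def Fbar_def)

lemma Cd22_eq_info_block: "Cd22 a p t n P = info_block p t n P (Fm p t) (Fm p t) (Amat a p n) (Bmat a p n)"
  by (simp add: Cd22_def info_block_def Fbar_def)

lemma index_info_block:
  assumes X: "\<And>s. X s \<in> carrier_mat p t" and Y: "\<And>s. Y s \<in> carrier_mat p t"
    and A: "A \<in> carrier_mat p p" and B: "B \<in> carrier_mat p p" and ij: "i < t" "j < t"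
  shows "info_block p t n P X Y A B $$ (i,j) = real n * ((\<Sum>s\<in>Sset p t. P s * sandwich p (X s) A (Y s) i j)
        - sandwich p (msum p t P X p t) B (msum p t P Y p t) i j)"
proof -
  have "(msum p t P (\<lambda>s. transpose_mat (X s) * A * Y s) t t) $$ (i,j)
      = (\<Sum>s\<in>Sset p t. P s * sandwich p (X s) A (Y s) i j)"
    using index_transpose_mult_mult[OF X A Y ij] ij by (simp add: index_msum)
  thus ?thesis
    using index_transpose_mult_mult[OF msum_carrier B msum_carrier ij] ij B
    by (simp add: info_block_def)
qed

definition perm_equivariant :: "nat \<Rightarrow> nat \<Rightarrow> (nat list \<Rightarrow> real mat) \<Rightarrow> bool" where
  "perm_equivariant p t X \<longleftrightarrow> (\<forall>\<sigma> s k i. \<sigma> permutes {0..<t} \<longrightarrow> s \<in> Sset p t \<longrightarrow> k < p \<longrightarrow> i < t \<longrightarrow>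
      X (map \<sigma> s) $$ (k, \<sigma> i) = X s $$ (k, i))"

lemma perm_equivariant_Tm: "perm_equivariant p t (Tm p t)"
  unfolding perm_equivariant_def
proof (intro allI impI)
  fix \<sigma> s k i assume \<sigma>: "\<sigma> permutes {0..<t}" and s: "s \<in> Sset p t" and k: "k < p" and i: "i < t"
  have "(\<sigma> (s ! k) = \<sigma> i) = (s ! k = i)" using permutes_inj[OF \<sigma>] by (auto dest: injD)
  thus "Tm p t (map \<sigma> s) $$ (k, \<sigma> i) = Tm p t s $$ (k, i)"
    using s k i permutes_less[OF \<sigma> i] by (simp add: Tm_def Sset_def)
qed

lemma perm_equivariant_Fm: "perm_equivariant p t (Fm p t)"
  unfolding perm_equivariant_def
proof (intro allI impI)
  fix \<sigma> s k i assume \<sigma>: "\<sigma> permutes {0..<t}" and s: "s \<in> Sset p t" and k: "k < p" and i: "i < t"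
  have "(\<sigma> (s ! (k-1)) = \<sigma> i) = (s ! (k-1) = i)" using permutes_inj[OF \<sigma>] by (auto dest: injD)
  thus "Fm p t (map \<sigma> s) $$ (k, \<sigma> i) = Fm p t s $$ (k, i)"
    using s k i permutes_less[OF \<sigma> i] by (simp add: Fm_def Sset_def)
qed

lemma index_msum_permutes:
  assumes sym: "symmetric_design p t P" and X: "perm_equivariant p t X" and \<sigma>: "\<sigma> permutes {0..<t}"
    and k: "k < p" and i: "i < t"
  shows "msum p t P X p t $$ (k, \<sigma> i) = msum p t P X p t $$ (k, i)"
proof -
  have "msum p t P X p t $$ (k, \<sigma> i) = (\<Sum>s\<in>Sset p t. P s * X s $$ (k, \<sigma> i))"
    using k permutes_less[OF \<sigma> i] by (simp add: index_msum)
  also have "\<dots> = (\<Sum>s\<in>Sset p t. P s * X (map \<sigma> s) $$ (k, \<sigma> i))"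
    by (rule symmetric_design_sum_map_permutes[OF sym \<sigma>, symmetric])
  also have "\<dots> = msum p t P X p t $$ (k, i)"
    using X \<sigma> k i unfolding perm_equivariant_def by (simp add: index_msum)
  finally show ?thesis .
qed

lemma index_msum_const_row:
  assumes sym: "symmetric_design p t P" and X: "perm_equivariant p t X" and k: "k < p" and i: "i < t"
  shows "msum p t P X p t $$ (k,i) = msum p t P X p t $$ (k,0)"
proof -
  let ?\<sigma> = "Transposition.transpose 0 i"
  have \<sigma>: "?\<sigma> permutes {0..<t}" using i by (intro permutes_swap_id) auto
  have "?\<sigma> 0 = i" by (simp add: transpose_def)
  with index_msum_permutes[OF sym X \<sigma> k, of 0] i show ?thesis by simp
qed

lemma info_block_permutes:
  assumes sym: "symmetric_design p t P" and X: "perm_equivariant p t X" and Y: "perm_equivariant p t Y"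
    and Xc: "\<And>s. X s \<in> carrier_mat p t" and Yc: "\<And>s. Y s \<in> carrier_mat p t"
    and A: "A \<in> carrier_mat p p" and B: "B \<in> carrier_mat p p"
    and \<sigma>: "\<sigma> permutes {0..<t}" and i: "i < t" and j: "j < t"
  shows "info_block p t n P X Y A B $$ (\<sigma> i, \<sigma> j) = info_block p t n P X Y A B $$ (i, j)"
proof -
  have "(\<Sum>s\<in>Sset p t. P s * sandwich p (X s) A (Y s) (\<sigma> i) (\<sigma> j))
      = (\<Sum>s\<in>Sset p t. P s * sandwich p (X (map \<sigma> s)) A (Y (map \<sigma> s)) (\<sigma> i) (\<sigma> j))"
    by (rule symmetric_design_sum_map_permutes[OF sym \<sigma>, symmetric])
  also have "\<dots> = (\<Sum>s\<in>Sset p t. P s * sandwich p (X s) A (Y s) i j)"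
    using X Y \<sigma> i j unfolding perm_equivariant_def sandwich_def by (intro sum.cong) auto
  finally have "(\<Sum>s\<in>Sset p t. P s * sandwich p (X s) A (Y s) (\<sigma> i) (\<sigma> j))
      = (\<Sum>s\<in>Sset p t. P s * sandwich p (X s) A (Y s) i j)" .
  moreover have "sandwich p (msum p t P X p t) B (msum p t P Y p t) (\<sigma> i) (\<sigma> j)
      = sandwich p (msum p t P X p t) B (msum p t P Y p t) i j"
    unfolding sandwich_def using index_msum_permutes[OF sym X \<sigma> _ i] index_msum_permutes[OF sym Y \<sigma> _ j]
    by simp
  ultimately show ?thesis
    using index_info_block[OF Xc Yc A B permutes_less[OF \<sigma> i] permutes_less[OF \<sigma> j]]
      index_info_block[OF Xc Yc A B i j] by simp
qed

lemma index_info_block_cs: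
  assumes sym: "symmetric_design p t P" and X: "perm_equivariant p t X" and Y: "perm_equivariant p t Y"
    and Xc: "\<And>s. X s \<in> carrier_mat p t" and Yc: "\<And>s. Y s \<in> carrier_mat p t"
    and A: "A \<in> carrier_mat p p" and B: "B \<in> carrier_mat p p" and t: "t \<ge> 2"
    and i: "i < t" and j: "j < t"
  shows "info_block p t n P X Y A B $$ (i, j)
       = (if i = j then info_block p t n P X Y A B $$ (0,0) else info_block p t n P X Y A B $$ (0,1))"
  by (rule permutes_invariant_entries[OF info_block_permutes[OF sym X Y Xc Yc A B] t i j])

lemma sum_rotate3: "(\<Sum>i\<in>I. \<Sum>k\<in>K. \<Sum>l\<in>L. f i k l) = (\<Sum>k\<in>K. \<Sum>l\<in>L. \<Sum>i\<in>I. f i k l)"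
  by (subst sum.swap) (rule sum.cong[OF refl], rule sum.swap)

lemma sum_swap_weighted: "(\<Sum>i\<in>I. \<Sum>s\<in>S. (P s :: real) * f s i) = (\<Sum>s\<in>S. P s * (\<Sum>i\<in>I. f s i))"
  by (simp add: sum_distrib_left) (rule sum.swap)

lemma sum_if_eq: "i < t \<Longrightarrow> (\<Sum>j<t. if i = j then d else c) = d + (real t - 1) * (c::real)"
proof -
  assume i: "i < t"
  have "(\<Sum>j<t. if i = j then d else c) = (\<Sum>j<t. c + (if i = j then d - c else 0))"
    by (rule sum.cong) auto
  also have "\<dots> = t * c + (d - c)" using i by (simp add: sum.distrib)
  finally show ?thesis by (simp add: algebra_simps)
qed

lemma sandwich_colsum_eq_0:
  assumes X: "\<And>k. k < p \<Longrightarrow> (\<Sum>i<t. X $$ (k,i)) = 1"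
    and A: "\<And>l. l < p \<Longrightarrow> (\<Sum>k<p. A $$ (k,l)) = (0::real)"
  shows "(\<Sum>i<t. sandwich p X A Y i j) = 0"
proof -
  have "(\<Sum>i<t. sandwich p X A Y i j) = (\<Sum>k<p. \<Sum>l<p. \<Sum>i<t. X $$ (k,i) * A $$ (k,l) * Y $$ (l,j))"
    unfolding sandwich_def by (rule sum_rotate3)
  also have "\<dots> = (\<Sum>k<p. \<Sum>l<p. A $$ (k,l) * Y $$ (l,j))"
    using X by (simp add: sum_distrib_right[symmetric] mult.assoc)
  also have "\<dots> = (\<Sum>l<p. (\<Sum>k<p. A $$ (k,l)) * Y $$ (l,j))"
    by (subst sum.swap) (simp add: sum_distrib_right)
  also have "\<dots> = 0" using A by simp
  finally show ?thesis .
qed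

lemma msum_rowsum_eq_1:
  assumes d: "design p t P" and X: "\<And>s. s \<in> Sset p t \<Longrightarrow> (\<Sum>i<t. X s $$ (k,i)) = 1" and k: "k < p"
  shows "(\<Sum>i<t. msum p t P X p t $$ (k,i)) = 1"
proof -
  have "(\<Sum>i<t. msum p t P X p t $$ (k,i)) = (\<Sum>s\<in>Sset p t. P s * (\<Sum>i<t. X s $$ (k,i)))"
    using k by (simp add: index_msum sum_swap_weighted)
  also have "\<dots> = 1" using X d by (simp add: design_def)
  finally show ?thesis .
qed

lemma Tm_rowsum_eq_1:
  assumes s: "s \<in> Sset p t" and k: "k < p"
  shows "(\<Sum>i<t. Tm p t s $$ (k,i)) = 1"
proof -
  have "s ! k < t" using s k by (auto simp: Sset_def dest!: nth_mem)
  moreover have "(\<Sum>i<t. Tm p t s $$ (k,i)) = (\<Sum>i<t. if s ! k = i then 1 else 0)"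
    using k by (intro sum.cong) (auto simp: Tm_def)
  ultimately show ?thesis by simp
qed

lemma info_block_colsum_eq_0:
  assumes d: "design p t P"
    and Xc: "\<And>s. X s \<in> carrier_mat p t" and Yc: "\<And>s. Y s \<in> carrier_mat p t"
    and A: "A \<in> carrier_mat p p" and B: "B \<in> carrier_mat p p"
    and X1: "\<And>s k. s \<in> Sset p t \<Longrightarrow> k < p \<Longrightarrow> (\<Sum>i<t. X s $$ (k,i)) = 1"
    and A0: "\<And>l. l < p \<Longrightarrow> (\<Sum>k<p. A $$ (k,l)) = 0" and B0: "\<And>l. l < p \<Longrightarrow> (\<Sum>k<p. B $$ (k,l)) = 0"
    and j: "j < t"
  shows "(\<Sum>i<t. info_block p t n P X Y A B $$ (i,j)) = 0"
proof -
  have "(\<Sum>i<t. info_block p t n P X Y A B $$ (i,j))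
      = real n * ((\<Sum>s\<in>Sset p t. P s * (\<Sum>i<t. sandwich p (X s) A (Y s) i j))
        - (\<Sum>i<t. sandwich p (msum p t P X p t) B (msum p t P Y p t) i j))"
    using index_info_block[OF Xc Yc A B _ j]
    by (simp add: sum_distrib_left[symmetric] sum_subtractf sum_swap_weighted)
  also have "\<dots> = 0"
    using sandwich_colsum_eq_0[OF X1 A0] sandwich_colsum_eq_0[OF msum_rowsum_eq_1[OF d X1] B0] by simp
  finally show ?thesis .
qed

section \<open>Centred traces\<close>

text \<open>The trace of B_t M B_t, written in terms of the entries m of M.\<close>
definition centred_trace :: "nat \<Rightarrow> (nat \<Rightarrow> nat \<Rightarrow> real) \<Rightarrow> real" where
  "centred_trace t m = (\<Sum>i<t. m i i) - (\<Sum>i<t. \<Sum>j<t. m i j) / real t"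

lemma centred_trace_cong:
  "(\<And>i j. i < t \<Longrightarrow> j < t \<Longrightarrow> m i j = m' i j) \<Longrightarrow> centred_trace t m = centred_trace t m'"
  unfolding centred_trace_def by (intro arg_cong2[where f="\<lambda>x y. x - y / real t"] sum.cong) auto

lemma centred_trace_cs: "t > 0 \<Longrightarrow> centred_trace t (\<lambda>i j. if i = j then d else c) = (real t - 1) * (d - c)"
  unfolding centred_trace_def by (simp add: sum_if_eq field_simps)

lemma centred_trace_permutes:
  assumes \<sigma>: "\<sigma> permutes {0..<t}"
  shows "centred_trace t (\<lambda>i j. m (\<sigma> i) (\<sigma> j)) = centred_trace t m"
proof -
  have \<sigma>': "\<sigma> permutes {..<t}" using \<sigma> by (simp add: lessThan_atLeast0)
  have "(\<Sum>j<t. m (\<sigma> i) (\<sigma> j)) = (\<Sum>j<t. m (\<sigma> i) j)" for i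
    using sum.permute[OF \<sigma>', of "m (\<sigma> i)"] by (simp add: comp_def)
  hence "(\<Sum>i<t. \<Sum>j<t. m (\<sigma> i) (\<sigma> j)) = (\<Sum>i<t. \<Sum>j<t. m (\<sigma> i) j)" by simp
  also have "\<dots> = (\<Sum>i<t. \<Sum>j<t. m i j)"
    using sum.permute[OF \<sigma>', of "\<lambda>i. \<Sum>j<t. m i j", symmetric] by (simp add: comp_def)
  finally show ?thesis
    using sum.permute[OF \<sigma>', of "\<lambda>i. m i i", symmetric] by (simp add: centred_trace_def comp_def)
qed

lemma index_Bcent: "i < t \<Longrightarrow> j < t \<Longrightarrow> Bcent t $$ (i,j) = (if i = j then 1 else 0) - 1 / real t"
  by (simp add: Bcent_def)

lemma Bcent_carrier[simp]: "Bcent t \<in> carrier_mat t t"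
  by (simp add: Bcent_def)

lemma dim_Bcent[simp]: "dim_row (Bcent t) = t" "dim_col (Bcent t) = t"
  by (simp_all add: Bcent_def)

lemma index_mult_Bcent:
  assumes X: "X \<in> carrier_mat p t" and k: "k < p" and i: "i < t"
  shows "(X * Bcent t) $$ (k,i) = X $$ (k,i) - (\<Sum>j<t. X $$ (k,j)) / real t"
proof -
  have "(X * Bcent t) $$ (k,i) = (\<Sum>j<t. X $$ (k,j) * ((if j = i then 1 else 0) - 1 / real t))"
    using X k i by (simp add: Bcent_def scalar_prod_def lessThan_atLeast0)
  also have "\<dots> = (\<Sum>j<t. (if j = i then X $$ (k,j) else 0) - X $$ (k,j) / real t)"
    by (intro sum.cong) (auto simp: algebra_simps)
  also have "\<dots> = X $$ (k,i) - (\<Sum>j<t. X $$ (k,j)) / real t"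
    using i by (simp add: sum_subtractf sum_divide_distrib)
  finally show ?thesis .
qed

lemma index_Bcent_mult:
  assumes M: "M \<in> carrier_mat t t" and i: "i < t" and j: "j < t"
  shows "(Bcent t * M) $$ (i,j) = M $$ (i,j) - (\<Sum>k<t. M $$ (k,j)) / real t"
proof -
  have "(Bcent t * M) $$ (i,j) = (\<Sum>k<t. ((if i = k then 1 else 0) - 1 / real t) * M $$ (k,j))"
    using M i j by (simp add: Bcent_def scalar_prod_def lessThan_atLeast0)
  also have "\<dots> = (\<Sum>k<t. (if i = k then M $$ (k,j) else 0) - M $$ (k,j) / real t)"
    by (intro sum.cong) (auto simp: algebra_simps)
  also have "\<dots> = M $$ (i,j) - (\<Sum>k<t. M $$ (k,j)) / real t"
    using i by (simp add: sum_subtractf sum_divide_distrib)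
  finally show ?thesis .
qed

lemma sum_centred_product:
  fixes x y :: "nat \<Rightarrow> real"
  assumes t: "t > 0"
  shows "(\<Sum>i<t. (x i - (\<Sum>j<t. x j) / real t) * (y i - (\<Sum>j<t. y j) / real t))
       = (\<Sum>i<t. x i * y i) - (\<Sum>j<t. x j) * (\<Sum>j<t. y j) / real t"
proof -
  define a where "a = (\<Sum>j<t. x j) / real t"
  define b where "b = (\<Sum>j<t. y j) / real t"
  have sx: "(\<Sum>j<t. x j) = a * t" and sy: "(\<Sum>j<t. y j) = b * t" using t by (simp_all add: a_def b_def)
  have "(\<Sum>i<t. (x i - a) * (y i - b)) = (\<Sum>i<t. x i * y i - (b * x i + a * y i) + a * b)"
    by (rule sum.cong) (auto simp: algebra_simps)
  also have "\<dots> = (\<Sum>i<t. x i * y i) - (b * (\<Sum>i<t. x i) + a * (\<Sum>i<t. y i)) + a * b * t"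
    by (simp add: sum.distrib sum_subtractf sum_distrib_left)
  also have "\<dots> = (\<Sum>i<t. x i * y i) - (a * t) * (b * t) / real t"
    using t by (simp add: sx sy field_simps)
  finally show ?thesis by (simp add: a_def[symmetric] b_def[symmetric] sx sy)
qed

lemma centred_trace_sandwich:
  assumes X: "X \<in> carrier_mat p t" and Y: "Y \<in> carrier_mat p t" and t: "t > 0"
  shows "centred_trace t (sandwich p X A Y) = (\<Sum>i<t. sandwich p (X * Bcent t) A (Y * Bcent t) i i)"
proof -
  let ?rX = "\<lambda>k. \<Sum>j<t. X $$ (k,j)" and ?rY = "\<lambda>l. \<Sum>j<t. Y $$ (l,j)"
  have "(\<Sum>i<t. sandwich p (X * Bcent t) A (Y * Bcent t) i i)
      = (\<Sum>i<t. \<Sum>k<p. \<Sum>l<p. (X $$ (k,i) - ?rX k / t) * A $$ (k,l) * (Y $$ (l,i) - ?rY l / t))"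
    unfolding sandwich_def using index_mult_Bcent[OF X] index_mult_Bcent[OF Y] by simp
  also have "\<dots> = (\<Sum>k<p. \<Sum>l<p. \<Sum>i<t. A $$ (k,l) * ((X $$ (k,i) - ?rX k / t) * (Y $$ (l,i) - ?rY l / t)))"
    by (subst sum_rotate3) (simp add: ac_simps)
  also have "\<dots> = (\<Sum>k<p. \<Sum>l<p. A $$ (k,l) * ((\<Sum>i<t. X $$ (k,i) * Y $$ (l,i)) - ?rX k * ?rY l / t))"
    by (simp add: sum_distrib_left[symmetric] sum_centred_product[OF t])
  finally have R: "(\<Sum>i<t. sandwich p (X * Bcent t) A (Y * Bcent t) i i) = \<dots>" .
  have diag: "(\<Sum>i<t. sandwich p X A Y i i) = (\<Sum>k<p. \<Sum>l<p. A $$ (k,l) * (\<Sum>i<t. X $$ (k,i) * Y $$ (l,i)))"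
    unfolding sandwich_def by (subst sum_rotate3) (simp add: sum_distrib_left ac_simps)
  have all: "(\<Sum>i<t. \<Sum>j<t. sandwich p X A Y i j) = (\<Sum>k<p. \<Sum>l<p. A $$ (k,l) * (?rX k * ?rY l))"
  proof -
    have "(\<Sum>i<t. \<Sum>j<t. sandwich p X A Y i j)
        = (\<Sum>i<t. \<Sum>k<p. \<Sum>l<p. \<Sum>j<t. X $$ (k,i) * A $$ (k,l) * Y $$ (l,j))"
      unfolding sandwich_def by (rule sum.cong[OF refl], rule sum_rotate3)
    also have "\<dots> = (\<Sum>k<p. \<Sum>l<p. \<Sum>i<t. \<Sum>j<t. X $$ (k,i) * A $$ (k,l) * Y $$ (l,j))"
      by (rule sum_rotate3)
    also have "\<dots> = (\<Sum>k<p. \<Sum>l<p. A $$ (k,l) * (?rX k * ?rY l))"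
    proof (intro sum.cong refl)
      fix k l
      show "(\<Sum>i<t. \<Sum>j<t. X $$ (k,i) * A $$ (k,l) * Y $$ (l,j)) = A $$ (k,l) * (?rX k * ?rY l)"
        unfolding sum_product by (simp add: sum_distrib_left ac_simps)
    qed
    finally show ?thesis .
  qed
  show ?thesis unfolding centred_trace_def diag all R
    by (simp add: sum_divide_distrib sum_subtractf right_diff_distrib)
qed

lemma mtrace_centred_sandwich:
  assumes X: "X \<in> carrier_mat p t" and Y: "Y \<in> carrier_mat p t" and A: "A \<in> carrier_mat p p" and t: "t > 0"
  shows "mtrace (transpose_mat (X * Bcent t) * A * (Y * Bcent t)) = centred_trace t (sandwich p X A Y)"
  using mtrace_transpose_mult_mult[OF mult_carrier_mat[OF X Bcent_carrier] A mult_carrier_mat[OF Y Bcent_carrier]]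
    centred_trace_sandwich[OF X Y t] by simp

lemma sum_smult_diff: "(\<Sum>i\<in>I. (c::real) * (f i - g i)) = c * ((\<Sum>i\<in>I. f i) - (\<Sum>i\<in>I. g i))"
  by (simp add: sum_distrib_left sum_subtractf right_diff_distrib)

lemma centred_trace_weighted_diff:
  "centred_trace t (\<lambda>i j. c * ((\<Sum>s\<in>S. P s * f s i j) - g i j))
   = c * ((\<Sum>s\<in>S. P s * centred_trace t (f s)) - centred_trace t g)"
proof -
  have diag: "(\<Sum>i<t. c * ((\<Sum>s\<in>S. P s * f s i i) - g i i))
      = c * ((\<Sum>s\<in>S. P s * (\<Sum>i<t. f s i i)) - (\<Sum>i<t. g i i))"
    by (simp only: sum_smult_diff sum_swap_weighted)
  have all: "(\<Sum>i<t. \<Sum>j<t. c * ((\<Sum>s\<in>S. P s * f s i j) - g i j))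
      = c * ((\<Sum>s\<in>S. P s * (\<Sum>i<t. \<Sum>j<t. f s i j)) - (\<Sum>i<t. \<Sum>j<t. g i j))"
    by (simp only: sum_smult_diff sum_swap_weighted)
  have weighted: "(\<Sum>s\<in>S. P s * centred_trace t (f s))
      = (\<Sum>s\<in>S. P s * (\<Sum>i<t. f s i i)) - (\<Sum>s\<in>S. P s * (\<Sum>i<t. \<Sum>j<t. f s i j)) / real t"
    unfolding centred_trace_def by (simp add: right_diff_distrib sum_subtractf sum_divide_distrib[symmetric])
  show ?thesis unfolding weighted unfolding centred_trace_def diag all
    by (simp add: algebra_simps diff_divide_distrib)
qed

lemma centred_trace_const_rows:
  assumes X: "X \<in> carrier_mat p t" and Y: "Y \<in> carrier_mat p t" and t: "t > 0"
    and const: "\<And>k i. k < p \<Longrightarrow> i < t \<Longrightarrow> X $$ (k,i) = X $$ (k,0)"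
  shows "centred_trace t (sandwich p X A Y) = 0"
proof -
  have "(X * Bcent t) $$ (k,i) = 0" if "k < p" "i < t" for k i
  proof -
    have "(\<Sum>j<t. X $$ (k,j)) = (\<Sum>j<t. X $$ (k,0))"
      by (rule sum.cong[OF refl], rule const[OF that(1)]) simp
    thus ?thesis using index_mult_Bcent[OF X that] const[OF that] t by simp
  qed
  thus ?thesis unfolding centred_trace_sandwich[OF X Y t] sandwich_def by simp
qed

lemma centred_trace_info_block:
  assumes sym: "symmetric_design p t P" and X: "perm_equivariant p t X" and Y: "perm_equivariant p t Y"
    and Xc: "\<And>s. X s \<in> carrier_mat p t" and Yc: "\<And>s. Y s \<in> carrier_mat p t"
    and A: "A \<in> carrier_mat p p" and B: "B \<in> carrier_mat p p" and t: "t > 0"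
  shows "centred_trace t (\<lambda>i j. info_block p t n P X Y A B $$ (i,j))
       = real n * (\<Sum>s\<in>Sset p t. P s * mtrace (transpose_mat (X s * Bcent t) * A * (Y s * Bcent t)))"
proof -
  have "centred_trace t (\<lambda>i j. info_block p t n P X Y A B $$ (i,j))
      = real n * ((\<Sum>s\<in>Sset p t. P s * centred_trace t (sandwich p (X s) A (Y s)))
                  - centred_trace t (sandwich p (msum p t P X p t) B (msum p t P Y p t)))"
    unfolding centred_trace_weighted_diff[symmetric]
    by (rule centred_trace_cong) (rule index_info_block[OF Xc Yc A B])
  also have "centred_trace t (sandwich p (msum p t P X p t) B (msum p t P Y p t)) = 0"
    by (rule centred_trace_const_rows[OF msum_carrier msum_carrier t index_msum_const_row[OF sym X]])
  finally show ?thesis by (simp add: mtrace_centred_sandwich[OF Xc Yc A t])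
qed

section \<open>The matrices A and B\<close>

definition centring_comb :: "nat \<Rightarrow> (nat \<Rightarrow> real) \<Rightarrow> real mat" where
  "centring_comb p c = mat p p (\<lambda>ij. \<Sum>m=1..p. c m * Bkp p m $$ ij)"

lemma Amat_eq_centring_comb: "Amat a p n = centring_comb p (alpha a n)"
  by (simp add: Amat_def centring_comb_def)

lemma Bmat_eq_centring_comb: "Bmat a p n = centring_comb p (beta a p n)"
  by (simp add: Bmat_def centring_comb_def)

lemma centring_comb_carrier[simp]: "centring_comb p c \<in> carrier_mat p p"
  by (simp add: centring_comb_def)

lemma index_Bkp:
  "k < p \<Longrightarrow> l < p \<Longrightarrow> Bkp p m $$ (k,l) = (if k < m \<and> l < m then (if k = l then 1 else 0) - 1 / real m else 0)"
  by (simp add: Bkp_def)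

lemma sum_if_less: "(m::nat) \<le> p \<Longrightarrow> (\<Sum>l<p. if l < m then f l else 0) = (\<Sum>l<m. f l)"
  by (simp add: sum.If_cases Int_absorb1 lessThan_subset_iff flip: lessThan_def)

lemma Bkp_rowsum_eq_0:
  assumes m: "1 \<le> m" "m \<le> p" and k: "k < p"
  shows "(\<Sum>l<p. Bkp p m $$ (k,l)) = 0"
proof (cases "k < m")
  case True
  have "(\<Sum>l<p. Bkp p m $$ (k,l)) = (\<Sum>l<p. if l < m then (if k = l then 1 else 0) - 1 / real m else 0)"
    using k True by (intro sum.cong) (auto simp: index_Bkp)
  also have "\<dots> = (\<Sum>l<m. (if k = l then 1 else 0) - 1 / real m)" by (rule sum_if_less[OF m(2)])
  also have "\<dots> = 0" using True m by (simp add: sum_subtractf)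
  finally show ?thesis .
next
  case False
  thus ?thesis using k by (simp add: index_Bkp)
qed

lemma quad_form_Bkp:
  assumes m: "1 \<le> m" "m \<le> p"
  shows "(\<Sum>k<p. \<Sum>l<p. v k * Bkp p m $$ (k,l) * v l) = (\<Sum>k<m. (v k - (\<Sum>j<m. v j) / real m)\<^sup>2)"
proof -
  have "(\<Sum>k<p. \<Sum>l<p. v k * Bkp p m $$ (k,l) * v l)
      = (\<Sum>k<p. if k < m then (\<Sum>l<m. (if k = l then v k * v l else 0) - v k * v l / real m) else 0)"
  proof (rule sum.cong[OF refl])
    fix k assume k: "k \<in> {..<p}"
    have "(\<Sum>l<p. v k * Bkp p m $$ (k,l) * v l)
        = (\<Sum>l<p. if l < m then (if k < m then (if k = l then v k * v l else 0) - v k * v l / real m else 0) else 0)"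
      using k by (intro sum.cong) (auto simp: index_Bkp algebra_simps)
    thus "(\<Sum>l<p. v k * Bkp p m $$ (k,l) * v l)
        = (if k < m then (\<Sum>l<m. (if k = l then v k * v l else 0) - v k * v l / real m) else 0)"
      by (simp add: sum_if_less[OF m(2)])
  qed
  also have "\<dots> = (\<Sum>k<m. v k * v k - (\<Sum>l<m. v k * v l) / real m)"
    by (simp add: sum_if_less[OF m(2)] sum_subtractf sum_divide_distrib)
  also have "\<dots> = (\<Sum>k<m. v k * v k) - (\<Sum>k<m. v k) * (\<Sum>k<m. v k) / real m"
    by (simp add: sum_subtractf sum_divide_distrib[symmetric] sum_product)
  also have "\<dots> = (\<Sum>k<m. (v k - (\<Sum>j<m. v j) / real m)\<^sup>2)"
    using m by (simp add: sum_centred_product power2_eq_square)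
  finally show ?thesis .
qed

lemma index_Bkp_commute: "k < p \<Longrightarrow> l < p \<Longrightarrow> Bkp p m $$ (k,l) = Bkp p m $$ (l,k)"
  by (auto simp: index_Bkp)

lemma index_centring_comb_commute:
  "k < p \<Longrightarrow> l < p \<Longrightarrow> centring_comb p c $$ (k,l) = centring_comb p c $$ (l,k)"
  by (simp add: centring_comb_def index_Bkp_commute)

lemma centring_comb_colsum_eq_0:
  assumes l: "l < p"
  shows "(\<Sum>k<p. centring_comb p c $$ (k,l)) = 0"
proof -
  have "(\<Sum>k<p. centring_comb p c $$ (k,l)) = (\<Sum>k<p. \<Sum>m=1..p. c m * Bkp p m $$ (l,k))"
    using l by (intro sum.cong) (auto simp: centring_comb_def index_Bkp_commute[of _ p])
  also have "\<dots> = (\<Sum>m=1..p. c m * (\<Sum>k<p. Bkp p m $$ (l,k)))"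
    by (subst sum.swap) (simp add: sum_distrib_left)
  also have "\<dots> = 0" using Bkp_rowsum_eq_0 l by simp
  finally show ?thesis .
qed

lemma centring_comb_nonneg_definite:
  assumes c: "\<And>m. 1 \<le> m \<Longrightarrow> m \<le> p \<Longrightarrow> c m \<ge> 0"
  shows "(\<Sum>k<p. \<Sum>l<p. v k * centring_comb p c $$ (k,l) * v l) \<ge> 0"
proof -
  have "(\<Sum>k<p. \<Sum>l<p. v k * centring_comb p c $$ (k,l) * v l)
      = (\<Sum>k<p. \<Sum>l<p. \<Sum>m=1..p. c m * (v k * Bkp p m $$ (k,l) * v l))"
    by (intro sum.cong refl) (simp add: centring_comb_def sum_distrib_left sum_distrib_right ac_simps)
  also have "\<dots> = (\<Sum>m=1..p. c m * (\<Sum>k<p. \<Sum>l<p. v k * Bkp p m $$ (k,l) * v l))"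
    by (subst sum_rotate3[symmetric]) (simp add: sum_distrib_left)
  also have "\<dots> \<ge> 0"
    using c by (intro sum_nonneg) (auto simp: quad_form_Bkp intro!: mult_nonneg_nonneg sum_nonneg)
  finally show ?thesis .
qed

lemma power_diff_le_mult_diff:
  fixes x y :: real
  assumes "0 \<le> x" "x \<le> y" "y \<le> 1"
  shows "y ^ N - x ^ N \<le> real N * (y - x)"
proof -
  have "y ^ N - x ^ N = (y - x) * (\<Sum>i<N. x ^ (N - Suc i) * y ^ i)" by (rule power_diff_sumr2)
  also have "\<dots> \<le> (y - x) * (\<Sum>i<N. 1)"
    using assms by (intro mult_left_mono sum_mono mult_le_one power_le_one) auto
  finally show ?thesis by (simp add: mult.commute)
qed

lemma alpha_nonneg:
  assumes a0: "\<forall>i\<in>{1..p}. a i \<ge> 0" and a1: "(\<Sum>i=1..p. a i) = 1" and m: "1 \<le> m" "m \<le> p"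
  shows "alpha a n m \<ge> 0"
proof -
  define x where "x = asum a 1 (m-1)"
  define y where "y = asum a 1 m"
  have yx: "y = x + a m" using m unfolding x_def y_def asum_def by (cases m) auto
  have x0: "0 \<le> x" unfolding x_def asum_def using a0 m by (intro sum_nonneg) auto
  have "y \<le> (\<Sum>i=1..p. a i)" unfolding y_def asum_def using a0 m by (intro sum_mono2) auto
  hence "y \<le> 1" using a1 by simp
  hence "y ^ (n+1) - x ^ (n+1) \<le> real (n+1) * (y - x)"
    using x0 a0 m yx by (intro power_diff_le_mult_diff) auto
  thus ?thesis using yx unfolding alpha_def x_def[symmetric] y_def[symmetric] by simp
qed

section \<open>Completely symmetric matrices and the centring matrix\<close>

lemma smult_smult_mat: "(a::real) \<cdot>\<^sub>m (b \<cdot>\<^sub>m A) = (a * b) \<cdot>\<^sub>m A"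
  by (rule eq_matI) auto

lemma smult_mult_smult:
  fixes B G :: "real mat"
  assumes B: "B \<in> carrier_mat t t" and G: "G \<in> carrier_mat t t"
  shows "(e \<cdot>\<^sub>m B) * G * (e \<cdot>\<^sub>m B) = (e * e) \<cdot>\<^sub>m (B * G * B)"
proof -
  have BG: "B * G \<in> carrier_mat t t" using B G by (rule mult_carrier_mat)
  have "(e \<cdot>\<^sub>m B) * G * (e \<cdot>\<^sub>m B) = (e \<cdot>\<^sub>m (B * G)) * (e \<cdot>\<^sub>m B)"
    by (simp add: mult_smult_assoc_mat[OF B G])
  also have "\<dots> = e \<cdot>\<^sub>m (e \<cdot>\<^sub>m (B * G * B))"
    by (simp add: mult_smult_assoc_mat[OF BG smult_carrier_mat[OF B]] mult_smult_distrib[OF BG B])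
  finally show ?thesis by (simp add: smult_smult_mat)
qed

lemma completely_symmetric_smult_Bcent: "completely_symmetric t (c \<cdot>\<^sub>m Bcent t)"
  unfolding completely_symmetric_def
  by (rule exI[of _ c], rule exI[of _ "- c / real t"], rule eq_matI) (auto simp: index_Bcent algebra_simps)

lemma mtrace_smult_Bcent: "t > 0 \<Longrightarrow> mtrace (c \<cdot>\<^sub>m Bcent t) = c * (real t - 1)"
  by (simp add: mtrace_def index_Bcent algebra_simps)

lemma cs_colsum_eq_0_eq_smult_Bcent:
  fixes M :: "real mat"
  assumes M: "M \<in> carrier_mat t t" and E: "\<And>i j. i < t \<Longrightarrow> j < t \<Longrightarrow> M $$ (i,j) = (if i = j then d else c)"
    and colsum: "(\<Sum>i<t. M $$ (i,0)) = 0" and t: "t > 0"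
  shows "M = (d - c) \<cdot>\<^sub>m Bcent t"
proof -
  have "(\<Sum>i<t. M $$ (i,0)) = (\<Sum>i<t. if 0 = i then d else c)"
    using E t by (intro sum.cong) auto
  hence dc: "d + (real t - 1) * c = 0" using colsum sum_if_eq[OF t, of d c] by simp
  show ?thesis
  proof (rule eq_matI)
    fix i j assume "i < dim_row ((d - c) \<cdot>\<^sub>m Bcent t)" "j < dim_col ((d - c) \<cdot>\<^sub>m Bcent t)"
    hence i: "i < t" and j: "j < t" by auto
    show "M $$ (i,j) = ((d - c) \<cdot>\<^sub>m Bcent t) $$ (i,j)"
      using E[OF i j] dc t i j by (simp add: index_Bcent field_simps)
  qed (use M in auto)
qed

lemma Bcent_mult_cs:
  fixes M :: "real mat"
  assumes M: "M \<in> carrier_mat t t" and E: "\<And>i j. i < t \<Longrightarrow> j < t \<Longrightarrow> M $$ (i,j) = (if i = j then d else c)"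
    and t: "t > 0"
  shows "Bcent t * M = (d - c) \<cdot>\<^sub>m Bcent t" "M * Bcent t = (d - c) \<cdot>\<^sub>m Bcent t"
proof -
  have col: "(\<Sum>k<t. M $$ (k,j)) = d + (real t - 1) * c" if j: "j < t" for j
  proof -
    have "(\<Sum>k<t. M $$ (k,j)) = (\<Sum>k<t. if j = k then d else c)" using E j by (intro sum.cong) auto
    thus ?thesis using sum_if_eq[OF j] by simp
  qed
  have row: "(\<Sum>k<t. M $$ (i,k)) = d + (real t - 1) * c" if i: "i < t" for i
  proof -
    have "(\<Sum>k<t. M $$ (i,k)) = (\<Sum>k<t. if i = k then d else c)" using E i by (intro sum.cong) auto
    thus ?thesis using sum_if_eq[OF i] by simp
  qed
  show "Bcent t * M = (d - c) \<cdot>\<^sub>m Bcent t"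
  proof (rule eq_matI)
    fix i j assume "i < dim_row ((d - c) \<cdot>\<^sub>m Bcent t)" "j < dim_col ((d - c) \<cdot>\<^sub>m Bcent t)"
    hence i: "i < t" and j: "j < t" by auto
    show "(Bcent t * M) $$ (i,j) = ((d - c) \<cdot>\<^sub>m Bcent t) $$ (i,j)"
      unfolding index_Bcent_mult[OF M i j] col[OF j] E[OF i j] using i j t
      by (cases "i = j") (simp_all add: index_Bcent field_simps)
  qed (use M in auto)
  show "M * Bcent t = (d - c) \<cdot>\<^sub>m Bcent t"
  proof (rule eq_matI)
    fix i j assume "i < dim_row ((d - c) \<cdot>\<^sub>m Bcent t)" "j < dim_col ((d - c) \<cdot>\<^sub>m Bcent t)"
    hence i: "i < t" and j: "j < t" by auto
    show "(M * Bcent t) $$ (i,j) = ((d - c) \<cdot>\<^sub>m Bcent t) $$ (i,j)"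
      unfolding index_mult_Bcent[OF M i j] row[OF i] E[OF i j] using i j t
      by (cases "i = j") (simp_all add: index_Bcent field_simps)
  qed (use M in auto)
qed

lemma Bcent_idem:
  assumes t: "t > 0"
  shows "Bcent t * Bcent t = Bcent t"
proof -
  have "Bcent t * Bcent t = ((1 - 1 / real t) - (- 1 / real t)) \<cdot>\<^sub>m Bcent t"
    by (rule Bcent_mult_cs(1)[OF Bcent_carrier _ t]) (simp add: index_Bcent)
  also have "\<dots> = Bcent t" by (rule eq_matI) auto
  finally show ?thesis .
qed

lemma Bcent_ginverse_Bcent:
  fixes M G :: "real mat"
  assumes M: "M \<in> carrier_mat t t" and E: "\<And>i j. i < t \<Longrightarrow> j < t \<Longrightarrow> M $$ (i,j) = (if i = j then d else c)"
    and G: "G \<in> carrier_mat t t" and MGM: "M * G * M = M" and t: "t > 0" and dc: "d \<noteq> c"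
  shows "Bcent t * G * Bcent t = (1 / (d - c)) \<cdot>\<^sub>m Bcent t"
proof -
  let ?B = "Bcent t"
  note BM = Bcent_mult_cs[OF M E t]
  have MG: "M * G \<in> carrier_mat t t" and MGM_c: "M * G * M \<in> carrier_mat t t"
    using M G by (auto intro: mult_carrier_mat)
  have "(?B * M) * G * (M * ?B) = ?B * (M * G * M) * ?B"
    using M G MG MGM_c
    by (simp add: assoc_mult_mat[of _ t t _ t _ t] assoc_mult_mat[of M t t G t _ t])
  also have "\<dots> = ((d - c) \<cdot>\<^sub>m ?B) * ?B" by (simp only: MGM BM(1))
  also have "\<dots> = (d - c) \<cdot>\<^sub>m ?B"
    by (simp add: mult_smult_assoc_mat[OF Bcent_carrier Bcent_carrier] Bcent_idem[OF t])
  finally have "((d - c) * (d - c)) \<cdot>\<^sub>m (?B * G * ?B) = (d - c) \<cdot>\<^sub>m ?B"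
    by (simp only: BM smult_mult_smult[OF Bcent_carrier G])
  hence "(1 / ((d - c) * (d - c))) \<cdot>\<^sub>m (((d - c) * (d - c)) \<cdot>\<^sub>m (?B * G * ?B))
       = (1 / ((d - c) * (d - c))) \<cdot>\<^sub>m ((d - c) \<cdot>\<^sub>m ?B)" by simp
  hence "1 \<cdot>\<^sub>m (?B * G * ?B) = (1 / (d - c)) \<cdot>\<^sub>m ?B" using dc by (simp add: smult_smult_mat)
  moreover have "1 \<cdot>\<^sub>m (?B * G * ?B) = ?B * G * ?B" by (rule eq_matI) auto
  ultimately show ?thesis by simp
qed


lemma smult_diff_distrib_mat: "(a::real) \<cdot>\<^sub>m M - b \<cdot>\<^sub>m M = (a - b) \<cdot>\<^sub>m M"
  by (rule eq_matI) (auto simp: algebra_simps)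

lemma transpose_smult_Bcent: "transpose_mat (c \<cdot>\<^sub>m Bcent t) = c \<cdot>\<^sub>m Bcent t"
  by (rule eq_matI) (auto simp: index_Bcent)

lemma Amat_carrier[simp]: "Amat a p n \<in> carrier_mat p p"
  by (simp add: Amat_eq_centring_comb)

lemma Bmat_carrier[simp]: "Bmat a p n \<in> carrier_mat p p"
  by (simp add: Bmat_eq_centring_comb)

lemma Amat_colsum_eq_0: "l < p \<Longrightarrow> (\<Sum>k<p. Amat a p n $$ (k,l)) = 0"
  by (simp add: Amat_eq_centring_comb centring_comb_colsum_eq_0)

lemma Bmat_colsum_eq_0: "l < p \<Longrightarrow> (\<Sum>k<p. Bmat a p n $$ (k,l)) = 0"
  by (simp add: Bmat_eq_centring_comb centring_comb_colsum_eq_0)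

lemma centred_trace_info_block_cs:
  assumes sym: "symmetric_design p t P" and X: "perm_equivariant p t X" and Y: "perm_equivariant p t Y"
    and Xc: "\<And>s. X s \<in> carrier_mat p t" and Yc: "\<And>s. Y s \<in> carrier_mat p t"
    and A: "A \<in> carrier_mat p p" and B: "B \<in> carrier_mat p p" and t: "t \<ge> 2"
  shows "centred_trace t (\<lambda>i j. info_block p t n P X Y A B $$ (i,j))
       = (real t - 1) * (info_block p t n P X Y A B $$ (0,0) - info_block p t n P X Y A B $$ (0,1))"
proof -
  let ?C = "info_block p t n P X Y A B"
  have "centred_trace t (\<lambda>i j. ?C $$ (i,j)) = centred_trace t (\<lambda>i j. if i = j then ?C $$ (0,0) else ?C $$ (0,1))"
    by (rule centred_trace_cong) (rule index_info_block_cs[OF sym X Y Xc Yc A B t])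
  thus ?thesis using centred_trace_cs t by simp
qed

lemma info_block_eq_smult_Bcent:
  assumes d: "design p t P" and sym: "symmetric_design p t P"
    and X: "perm_equivariant p t X" and Y: "perm_equivariant p t Y"
    and Xc: "\<And>s. X s \<in> carrier_mat p t" and Yc: "\<And>s. Y s \<in> carrier_mat p t"
    and A: "A \<in> carrier_mat p p" and B: "B \<in> carrier_mat p p"
    and X1: "\<And>s k. s \<in> Sset p t \<Longrightarrow> k < p \<Longrightarrow> (\<Sum>i<t. X s $$ (k,i)) = 1"
    and A0: "\<And>l. l < p \<Longrightarrow> (\<Sum>k<p. A $$ (k,l)) = 0" and B0: "\<And>l. l < p \<Longrightarrow> (\<Sum>k<p. B $$ (k,l)) = 0"
    and t: "t \<ge> 2"
  shows "info_block p t n P X Y A B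
       = (centred_trace t (\<lambda>i j. info_block p t n P X Y A B $$ (i,j)) / (real t - 1)) \<cdot>\<^sub>m Bcent t"
proof -
  let ?C = "info_block p t n P X Y A B"
  have "?C = (?C $$ (0,0) - ?C $$ (0,1)) \<cdot>\<^sub>m Bcent t"
    using info_block_colsum_eq_0[OF d Xc Yc A B X1 A0 B0, where j=0] t
    by (intro cs_colsum_eq_0_eq_smult_Bcent[OF info_block_carrier index_info_block_cs[OF sym X Y Xc Yc A B t]])
       auto
  thus ?thesis using centred_trace_info_block_cs[OF sym X Y Xc Yc A B t] t by simp
qed

lemma qd_eq_centred_trace:
  assumes sym: "symmetric_design p t P" and t: "t > 0"
  shows "qd11 a p t n P = centred_trace t (\<lambda>i j. Cd11 a p t n P $$ (i,j))"
    and "qd12 a p t n P = centred_trace t (\<lambda>i j. Cd12 a p t n P $$ (i,j))"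
    and "qd22 a p t n P = centred_trace t (\<lambda>i j. Cd22 a p t n P $$ (i,j))"
  unfolding qd11_def qs11_def qd12_def qs12_def qd22_def qs22_def
    Cd11_eq_info_block Cd12_eq_info_block Cd22_eq_info_block
  by (simp_all add: centred_trace_info_block[OF sym _ _ _ _ Amat_carrier Bmat_carrier t]
      perm_equivariant_Tm perm_equivariant_Fm)

lemma Cd11_Cd12_eq_smult_Bcent:
  assumes d: "design p t P" and sym: "symmetric_design p t P" and t: "t \<ge> 2"
  shows "Cd11 a p t n P = (qd11 a p t n P / (real t - 1)) \<cdot>\<^sub>m Bcent t"
    and "Cd12 a p t n P = (qd12 a p t n P / (real t - 1)) \<cdot>\<^sub>m Bcent t"
  using qd_eq_centred_trace[OF sym, of a n] t
    info_block_eq_smult_Bcent[OF d sym perm_equivariant_Tm _ Tm_carrier _ Amat_carrier Bmat_carrier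
      Tm_rowsum_eq_1 Amat_colsum_eq_0 Bmat_colsum_eq_0 t]
  by (simp_all add: Cd11_eq_info_block Cd12_eq_info_block perm_equivariant_Tm perm_equivariant_Fm)

lemma Bcent_ginverse_Cd22:
  assumes sym: "symmetric_design p t P" and t: "t \<ge> 2"
    and G: "ginverse (Cd22 a p t n P) G" and q22: "qd22 a p t n P \<noteq> 0"
  shows "Bcent t * G * Bcent t = ((real t - 1) / qd22 a p t n P) \<cdot>\<^sub>m Bcent t"
proof -
  let ?C = "Cd22 a p t n P"
  have E: "\<And>i j. i < t \<Longrightarrow> j < t \<Longrightarrow> ?C $$ (i,j) = (if i = j then ?C $$ (0,0) else ?C $$ (0,1))"
    unfolding Cd22_eq_info_block
    by (rule index_info_block_cs[OF sym perm_equivariant_Fm perm_equivariant_Fm Fm_carrier Fm_carrier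
        Amat_carrier Bmat_carrier t])
  have q: "qd22 a p t n P = (real t - 1) * (?C $$ (0,0) - ?C $$ (0,1))"
    using qd_eq_centred_trace(3)[OF sym, of a n] t
      centred_trace_info_block_cs[OF sym perm_equivariant_Fm perm_equivariant_Fm Fm_carrier Fm_carrier
        Amat_carrier Bmat_carrier t]
    by (simp add: Cd22_eq_info_block)
  have "?C \<in> carrier_mat t t" by (simp add: Cd22_eq_info_block)
  moreover have "G \<in> carrier_mat t t" "?C * G * ?C = ?C" using G by (auto simp: ginverse_def Cd22_eq_info_block)
  moreover have "?C $$ (0,0) \<noteq> ?C $$ (0,1)" using q q22 by auto
  ultimately have "Bcent t * G * Bcent t = (1 / (?C $$ (0,0) - ?C $$ (0,1))) \<cdot>\<^sub>m Bcent t"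
    using t by (intro Bcent_ginverse_Bcent[OF _ E]) auto
  thus ?thesis using q t by simp
qed

lemma mtrace_quadratic_nonneg:
  fixes A N M :: "real mat"
  assumes N: "N \<in> carrier_mat p t" and M: "M \<in> carrier_mat p t" and A: "A \<in> carrier_mat p p"
    and sym: "\<And>k l. k < p \<Longrightarrow> l < p \<Longrightarrow> A $$ (k,l) = A $$ (l,k)"
    and nonneg: "\<And>v. (\<Sum>k<p. \<Sum>l<p. v k * A $$ (k,l) * v l) \<ge> 0"
  shows "mtrace (transpose_mat N * A * N) + 2 * x * mtrace (transpose_mat N * A * M)
         + x\<^sup>2 * mtrace (transpose_mat M * A * M) \<ge> 0"
proof -
  have column: "sandwich p N A N i i + 2 * x * sandwich p N A M i i + x\<^sup>2 * sandwich p M A M i i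
      = (\<Sum>k<p. \<Sum>l<p. (N $$ (k,i) + x * M $$ (k,i)) * A $$ (k,l) * (N $$ (l,i) + x * M $$ (l,i)))" for i
  proof -
    have "(\<Sum>k<p. \<Sum>l<p. M $$ (k,i) * A $$ (k,l) * N $$ (l,i)) = sandwich p N A M i i"
      unfolding sandwich_def
      by (subst sum.swap) (rule sum.cong[OF refl], rule sum.cong[OF refl], simp add: sym)
    moreover have "(\<Sum>k<p. \<Sum>l<p. (N $$ (k,i) + x * M $$ (k,i)) * A $$ (k,l) * (N $$ (l,i) + x * M $$ (l,i)))
       = (\<Sum>k<p. \<Sum>l<p. N $$ (k,i) * A $$ (k,l) * N $$ (l,i))
         + x * (\<Sum>k<p. \<Sum>l<p. N $$ (k,i) * A $$ (k,l) * M $$ (l,i))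
         + x * (\<Sum>k<p. \<Sum>l<p. M $$ (k,i) * A $$ (k,l) * N $$ (l,i))
         + x\<^sup>2 * (\<Sum>k<p. \<Sum>l<p. M $$ (k,i) * A $$ (k,l) * M $$ (l,i))"
      by (simp add: sum.distrib sum_distrib_left algebra_simps power2_eq_square)
    ultimately show ?thesis unfolding sandwich_def by simp
  qed
  have "mtrace (transpose_mat N * A * N) + 2 * x * mtrace (transpose_mat N * A * M)
        + x\<^sup>2 * mtrace (transpose_mat M * A * M)
      = (\<Sum>i<t. sandwich p N A N i i + 2 * x * sandwich p N A M i i + x\<^sup>2 * sandwich p M A M i i)"
    unfolding mtrace_transpose_mult_mult[OF N A N] mtrace_transpose_mult_mult[OF N A M]
      mtrace_transpose_mult_mult[OF M A M]
    by (simp add: sum.distrib sum_distrib_left)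
  also have "\<dots> \<ge> 0" unfolding column
  proof (rule sum_nonneg)
    fix i show "0 \<le> (\<Sum>k<p. \<Sum>l<p. (N $$ (k,i) + x * M $$ (k,i)) * A $$ (k,l) * (N $$ (l,i) + x * M $$ (l,i)))"
      using nonneg[of "\<lambda>k. N $$ (k,i) + x * M $$ (k,i)"] by simp
  qed
  finally show ?thesis .
qed

lemma qd_quadratic_nonneg:
  assumes d: "design p t P" and a0: "\<forall>i\<in>{1..p}. a i \<ge> 0" and a1: "(\<Sum>i=1..p. a i) = 1"
  shows "qd11 a p t n P + 2 * x * qd12 a p t n P + x\<^sup>2 * qd22 a p t n P \<ge> 0"
proof -
  have A_sym: "\<And>k l. k < p \<Longrightarrow> l < p \<Longrightarrow> Amat a p n $$ (k,l) = Amat a p n $$ (l,k)"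
    by (simp add: Amat_eq_centring_comb index_centring_comb_commute)
  have A_nonneg: "\<And>v. (\<Sum>k<p. \<Sum>l<p. v k * Amat a p n $$ (k,l) * v l) \<ge> 0"
    unfolding Amat_eq_centring_comb using alpha_nonneg[OF a0 a1] by (rule centring_comb_nonneg_definite)
  have "qd11 a p t n P + 2 * x * qd12 a p t n P + x\<^sup>2 * qd22 a p t n P
      = real n * (\<Sum>s\<in>Sset p t. P s * (qs11 a p t n s + 2 * x * qs12 a p t n s + x\<^sup>2 * qs22 a p t n s))"
    unfolding qd11_def qd12_def qd22_def by (simp add: algebra_simps sum.distrib sum_distrib_left)
  also have "\<dots> \<ge> 0"
    using d unfolding design_def qs11_def qs12_def qs22_def
    by (auto intro!: mult_nonneg_nonneg sum_nonneg mtrace_quadratic_nonneg[OF _ _ Amat_carrier A_sym A_nonneg]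
        mult_carrier_mat[OF _ Bcent_carrier])
  finally show ?thesis .
qed

lemma eq_0_if_affine_nonneg:
  fixes a b :: real
  assumes "\<And>x. a + 2 * x * b \<ge> 0"
  shows "b = 0"
proof (rule ccontr)
  assume b: "b \<noteq> 0"
  have "a + 2 * (- (a + 1) / (2 * b)) * b \<ge> 0" by (rule assms)
  also have "a + 2 * (- (a + 1) / (2 * b)) * b = -1" using b by (simp add: field_simps)
  finally show False by simp
qed

lemma qd12_eq_0_if_qd22_eq_0:
  assumes "design p t P" "\<forall>i\<in>{1..p}. a i \<ge> 0" "(\<Sum>i=1..p. a i) = 1" "qd22 a p t n P = 0"
  shows "qd12 a p t n P = 0"
  using qd_quadratic_nonneg[OF assms(1-3), of n] assms(4)
  by (intro eq_0_if_affine_nonneg[of "qd11 a p t n P"]) simp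

lemma Cd_eq_smult_Bcent:
  assumes t: "t \<ge> 2" and a0: "\<forall>i\<in>{1..p}. a i \<ge> 0" and a1: "(\<Sum>i=1..p. a i) = 1"
    and d: "design p t P" and sym: "symmetric_design p t P" and G: "ginverse (Cd22 a p t n P) G"
  shows "Cd a p t n P G = (qstar a p t n P / (real t - 1)) \<cdot>\<^sub>m Bcent t"
proof -
  let ?q11 = "qd11 a p t n P" and ?q12 = "qd12 a p t n P" and ?q22 = "qd22 a p t n P"
  have Gc: "G \<in> carrier_mat t t" using G by (simp add: ginverse_def Cd22_eq_info_block)
  have "Cd12 a p t n P * G * Cd21 a p t n P = (?q12 / (real t - 1) * (?q12 / (real t - 1))) \<cdot>\<^sub>m (Bcent t * G * Bcent t)"
    unfolding Cd21_def Cd11_Cd12_eq_smult_Bcent(2)[OF d sym t] transpose_smult_Bcent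
    by (rule smult_mult_smult[OF Bcent_carrier Gc])
  also have "\<dots> = (?q12\<^sup>2 / ?q22 / (real t - 1)) \<cdot>\<^sub>m Bcent t"
  proof (cases "?q22 = 0")
    case True
    thus ?thesis using qd12_eq_0_if_qd22_eq_0[OF d a0 a1] by (intro eq_matI) auto
  next
    case False
    thus ?thesis using t by (simp add: Bcent_ginverse_Cd22[OF sym t G] smult_smult_mat power2_eq_square mult.commute)
  qed
  finally show ?thesis
    unfolding Cd_def Cd11_Cd12_eq_smult_Bcent(1)[OF d sym t] qstar_def
    by (simp add: smult_diff_distrib_mat diff_divide_distrib)
qed

section \<open>Symmetrizing a design\<close>

definition symmetrize :: "nat \<Rightarrow> (nat list \<Rightarrow> real) \<Rightarrow> nat list \<Rightarrow> real" where
  "symmetrize t P s = (\<Sum>\<sigma>\<in>{\<sigma>. \<sigma> permutes {0..<t}}. P (map \<sigma> s)) / fact t"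

lemma sum_symmetrize:
  assumes q: "\<And>\<sigma> s. \<sigma> permutes {0..<t} \<Longrightarrow> s \<in> Sset p t \<Longrightarrow> q (map \<sigma> s) = q s"
  shows "(\<Sum>s\<in>Sset p t. symmetrize t P s * q s) = (\<Sum>s\<in>Sset p t. P s * (q s :: real))"
proof -
  let ?S = "{\<sigma>. \<sigma> permutes {0..<t}}"
  have "(\<Sum>s\<in>Sset p t. symmetrize t P s * q s) = (\<Sum>\<sigma>\<in>?S. \<Sum>s\<in>Sset p t. P (map \<sigma> s) * q s) / fact t"
    unfolding symmetrize_def by (simp add: sum_divide_distrib sum_distrib_right sum.swap[of _ "Sset p t"])
  also have "\<dots> = (\<Sum>\<sigma>\<in>?S. \<Sum>s\<in>Sset p t. P (map \<sigma> s) * q (map \<sigma> s)) / fact t"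
    by (rule arg_cong[where f="\<lambda>x. x / fact t"], rule sum.cong[OF refl], rule sum.cong[OF refl])
       (simp add: q)
  also have "\<dots> = (\<Sum>\<sigma>\<in>?S. \<Sum>s\<in>Sset p t. P s * q s) / fact t"
    using sum_Sset_map_permutes[where h="\<lambda>s. P s * q s"] by simp
  also have "\<dots> = (\<Sum>s\<in>Sset p t. P s * q s)"
    by (simp add: card_permutations)
  finally show ?thesis .
qed

lemma design_symmetrize:
  assumes "design p t P"
  shows "design p t (symmetrize t P)"
  unfolding design_def
proof
  show "\<forall>s\<in>Sset p t. 0 \<le> symmetrize t P s"
    using assms map_permutes_in_Sset unfolding design_def symmetrize_def
    by (auto intro!: sum_nonneg divide_nonneg_nonneg)
  show "(\<Sum>s\<in>Sset p t. symmetrize t P s) = 1"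
    using sum_symmetrize[of t p "\<lambda>_. 1" P] assms by (simp add: design_def)
qed

lemma symmetric_design_symmetrize: "symmetric_design p t (symmetrize t P)"
  unfolding symmetric_design_def
proof (intro allI impI ballI)
  fix \<tau> s assume \<tau>: "\<tau> permutes {0..<t}"
  have "(\<Sum>\<sigma>\<in>{\<sigma>. \<sigma> permutes {0..<t}}. P (map \<sigma> s)) = (\<Sum>\<sigma>\<in>{\<sigma>. \<sigma> permutes {0..<t}}. P (map (\<sigma> \<circ> \<tau>) s))"
    by (rule sum_permutations_compose_right[OF \<tau>])
  thus "symmetrize t P (map \<tau> s) = symmetrize t P s" unfolding symmetrize_def by simp
qed

lemma mtrace_centred_sandwich_map_permutes:
  assumes X: "perm_equivariant p t X" and Y: "perm_equivariant p t Y"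
    and Xc: "\<And>s. X s \<in> carrier_mat p t" and Yc: "\<And>s. Y s \<in> carrier_mat p t"
    and A: "A \<in> carrier_mat p p" and t: "t > 0"
    and \<sigma>: "\<sigma> permutes {0..<t}" and s: "s \<in> Sset p t"
  shows "mtrace (transpose_mat (X (map \<sigma> s) * Bcent t) * A * (Y (map \<sigma> s) * Bcent t))
       = mtrace (transpose_mat (X s * Bcent t) * A * (Y s * Bcent t))"
proof -
  have "centred_trace t (sandwich p (X (map \<sigma> s)) A (Y (map \<sigma> s)))
      = centred_trace t (\<lambda>i j. sandwich p (X (map \<sigma> s)) A (Y (map \<sigma> s)) (\<sigma> i) (\<sigma> j))"
    by (rule centred_trace_permutes[OF \<sigma>, symmetric])
  also have "\<dots> = centred_trace t (sandwich p (X s) A (Y s))"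
    by (rule centred_trace_cong) (use X Y \<sigma> s in \<open>simp add: perm_equivariant_def sandwich_def\<close>)
  finally show ?thesis by (simp add: mtrace_centred_sandwich[OF Xc Yc A t])
qed

lemma qstar_symmetrize:
  assumes t: "t > 0"
  shows "qstar a p t n (symmetrize t P) = qstar a p t n P"
proof -
  note invariant = mtrace_centred_sandwich_map_permutes[OF _ _ _ _ Amat_carrier t]
  have "qd11 a p t n (symmetrize t P) = qd11 a p t n P"
    unfolding qd11_def qs11_def
    by (simp add: sum_symmetrize invariant[OF perm_equivariant_Tm perm_equivariant_Tm Tm_carrier Tm_carrier])
  moreover have "qd12 a p t n (symmetrize t P) = qd12 a p t n P"
    unfolding qd12_def qs12_def
    by (simp add: sum_symmetrize invariant[OF perm_equivariant_Tm perm_equivariant_Fm Tm_carrier Fm_carrier])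
  moreover have "qd22 a p t n (symmetrize t P) = qd22 a p t n P"
    unfolding qd22_def qs22_def
    by (simp add: sum_symmetrize invariant[OF perm_equivariant_Fm perm_equivariant_Fm Fm_carrier Fm_carrier])
  ultimately show ?thesis unfolding qstar_def by simp
qed

theorem theorem3p2:
  fixes p t n :: nat and a :: "nat \<Rightarrow> real"
  assumes "p \<ge> 2" and "t \<ge> 2" and "n \<ge> 1"
    and "\<forall>i\<in>{1..p}. a i \<ge> 0" and "(\<Sum>i=1..p. a i) = 1"
  shows "(\<forall>P G. design p t P \<and> symmetric_design p t P \<and> ginverse (Cd22 a p t n P) G \<longrightarrow>
            completely_symmetric t (Cd a p t n P G) \<and>
            mtrace (Cd a p t n P G) = qstar a p t n P)
       \<and> (\<forall>P. design p t P \<longrightarrow>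
            (\<exists>P'. design p t P' \<and> symmetric_design p t P' \<and> qstar a p t n P' = qstar a p t n P))"
proof (rule conjI; intro allI impI)
  fix P G assume "design p t P \<and> symmetric_design p t P \<and> ginverse (Cd22 a p t n P) G"
  hence Cd: "Cd a p t n P G = (qstar a p t n P / (real t - 1)) \<cdot>\<^sub>m Bcent t"
    using Cd_eq_smult_Bcent assms by blast
  show "completely_symmetric t (Cd a p t n P G) \<and> mtrace (Cd a p t n P G) = qstar a p t n P"
    unfolding Cd using assms(2) by (simp add: completely_symmetric_smult_Bcent mtrace_smult_Bcent)
next
  fix P assume "design p t P"
  thus "\<exists>P'. design p t P' \<and> symmetric_design p t P' \<and> qstar a p t n P' = qstar a p t n P"
    using assms(2) by (intro exI[of _ "symmetrize t P"] conjI design_symmetrize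
        symmetric_design_symmetrize qstar_symmetrize) simp_all
qed

end
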